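(* Let $I=\{1,\dots,m\}$, $J=\{1,\dots,n\}$, let $b\in\mathbb{R}^m$, let $\hat{x}\in\mathbb{R}^n$ with $\hat{x}\neq 0$, let $\hat{a}_i\in\mathbb{R}^n$ ($i\in I$) be given prior vectors, let $\xi\in\mathbb{R}^m$ be a vector of real-valued weights, and let $\|\cdot\|$ be a norm on $\mathbb{R}^n$. Consider the problem NLO-SD: \[ \min_{A,c,\pi}\ \sum_{i\in I}\xi_i\|a_i-\hat{a}_i\| \] subject to $\sum_{j\in J}c_j\hat{x}_j-\sum_{i\in I}b_i\pi_i=0$; $\sum_{j\in J}a_{ij}\hat{x}_j\ge b_i$ for all $i\in I$; $\sum_{i\in I}\pi_i=1$; $\sum_{i\in I}a_{ij}\pi_i=c_j$ for all $j\in J$; $\pi_i\ge0$ for all $i\in I$. Let $\|\hat{x}\|^*=\max_{\|v\|=1}\hat{x}^\top v$ be the dual norm and let $v(\hat{x})\in\arg\max_{\|v\|=1}\hat{x}^\top v$. For each $i\in I$ define \[ f_i=\frac{\xi_i|\hat{a}_i^\top\hat{x}-b_i|}{\|\hat{x}\|^*},\qquad a^f_i=\hat{a}_i-\frac{\hat{a}_i^\top\hat{x}-b_i}{\|\hat{x}\|^*}v(\hat{x}), \] $g_i=f_i$ and $a^g_i=a^f_i$ if $\hat{a}_i^\top\hat{x}<b_i$, and $g_i=0$ and $a^g_i=\hat{a}_i$ otherwise. Let $i^*\in\arg\min_{i\in I}\{f_i-g_i\}$. Then the optimal value of NLO-SD is $f_{i^*}+\sum_{i\in I\setminus\{i^*\}}g_i$,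 and an optimal solution $(A,c,\pi)$ is given by $a_{i^*}=a^f_{i^*}$, $a_i=a^g_i$ for $i\in I\setminus\{i^*\}$, $c=a_{i^*}$, $\pi=e_{i^*}$. Moreover, if $b_i\neq0$ and $\hat{a}_i\neq0$ for all $i\in I$, then this solution satisfies $c\neq0$ and $a_i\neq0$ for all $i\in I$.
   Context: $a_i$ denotes the $i$-th row of $A=(a_{ij})\in\mathbb{R}^{m\times n}$, $c\in\mathbb{R}^n$, $\pi\in\mathbb{R}^m$, and $e_i$ denotes the $i$-th unit vector of $\mathbb{R}^m$. *)

theory Defs
  imports "HOL-Analysis.Analysis"
begin

definition is_norm :: "(real^'n \<Rightarrow> real) \<Rightarrow> bool" where
  "is_norm N \<longleftrightarrow> (\<forall>x. N x = 0 \<longleftrightarrow> x = 0) \<and> (\<forall>t x. N (t *\<^sub>R x) = \<bar>t\<bar> * N x)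
     \<and> (\<forall>x y. N (x + y) \<le> N x + N y)"

definition dual_norm :: "(real^'n \<Rightarrow> real) \<Rightarrow> real^'n \<Rightarrow> real" where
  "dual_norm N x = Sup ((\<lambda>v. x \<bullet> v) ` {v. N v = 1})"

definition nlo_sd_feasible ::
  "real^'m \<Rightarrow> real^'n \<Rightarrow> real^'n^'m \<Rightarrow> real^'n \<Rightarrow> real^'m \<Rightarrow> bool" where
  "nlo_sd_feasible b xh A c \<pi> \<longleftrightarrow>
     (\<Sum>j\<in>UNIV. c$j * xh$j) - (\<Sum>i\<in>UNIV. b$i * \<pi>$i) = 0
   \<and> (\<forall>i. (\<Sum>j\<in>UNIV. A$i$j * xh$j) \<ge> b$i)
   \<and> (\<Sum>i\<in>UNIV. \<pi>$i) = 1
   \<and> (\<forall>j. (\<Sum>i\<in>UNIV. A$i$j * \<pi>$i) = c$j)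
   \<and> (\<forall>i. \<pi>$i \<ge> 0)"

definition nlo_sd_obj ::
  "real^'m \<Rightarrow> (real^'n \<Rightarrow> real) \<Rightarrow> real^'n^'m \<Rightarrow> real^'n^'m \<Rightarrow> real" where
  "nlo_sd_obj \<xi> N ah A = (\<Sum>i\<in>UNIV. \<xi>$i * N (A$i - ah$i))"

definition f_val :: "real^'m \<Rightarrow> (real^'n \<Rightarrow> real) \<Rightarrow> real^'m \<Rightarrow> real^'n \<Rightarrow> real^'n^'m \<Rightarrow> 'm \<Rightarrow> real" where
  "f_val \<xi> N b xh ah i = \<xi>$i * \<bar>ah$i \<bullet> xh - b$i\<bar> / dual_norm N xh"

definition a_f :: "(real^'n \<Rightarrow> real) \<Rightarrow> real^'m \<Rightarrow> real^'n \<Rightarrow> real^'n^'m \<Rightarrow> real^'n \<Rightarrow> 'm \<Rightarrow> real^'n" where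
  "a_f N b xh ah v i = ah$i - ((ah$i \<bullet> xh - b$i) / dual_norm N xh) *\<^sub>R v"

definition g_val :: "real^'m \<Rightarrow> (real^'n \<Rightarrow> real) \<Rightarrow> real^'m \<Rightarrow> real^'n \<Rightarrow> real^'n^'m \<Rightarrow> 'm \<Rightarrow> real" where
  "g_val \<xi> N b xh ah i = (if ah$i \<bullet> xh < b$i then f_val \<xi> N b xh ah i else 0)"

definition a_g :: "(real^'n \<Rightarrow> real) \<Rightarrow> real^'m \<Rightarrow> real^'n \<Rightarrow> real^'n^'m \<Rightarrow> real^'n \<Rightarrow> 'm \<Rightarrow> real^'n" where
  "a_g N b xh ah v i = (if ah$i \<bullet> xh < b$i then a_f N b xh ah v i else ah$i)"

end

theory Submission imports Defs begin

text \<open>The dual norm inequality \<open>\<bar>xh \<bullet> w\<bar> \<le> dual_norm N xh * N w\<close> shows that moving the prior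
  row \<open>ah$i\<close> onto the hyperplane \<open>a \<bullet> xh = b$i\<close> costs at least \<open>f\<^sub>i\<close>, and into the half-space
  \<open>a \<bullet> xh \<ge> b$i\<close> at least \<open>g\<^sub>i\<close>; moving along the maximiser \<open>v\<close> attains both bounds.
  For feasible \<open>(A, c, \<pi>)\<close> the constraints give \<open>\<Sum>i. \<pi>$i * (A$i \<bullet> xh - b$i) = 0\<close> with
  nonnegative terms, so some row \<open>k\<close> lies on its hyperplane and the objective is at least
  \<open>f\<^sub>k + \<Sum>i\<noteq>k. g\<^sub>i\<close>, which is smallest for \<open>k = istar\<close>. Conversely the unit weight
  \<open>\<pi>\<close> at \<open>istar\<close> with \<open>c = A$istar\<close> makes the row-wise optimal choice feasible.\<close>

lemma is_normD:
  assumes "is_norm N"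
  shows is_norm_eq_0_iff: "N x = 0 \<longleftrightarrow> x = 0"
    and is_norm_scaleR: "N (t *\<^sub>R x) = \<bar>t\<bar> * N x"
    and is_norm_triangle: "N (x + y) \<le> N x + N y"
  using assms unfolding is_norm_def by auto

lemma is_norm_zero: "is_norm N \<Longrightarrow> N 0 = 0"
  by (simp add: is_norm_eq_0_iff)

lemma is_norm_minus: "is_norm N \<Longrightarrow> N (- x) = N x"
  using is_norm_scaleR[of N "-1" x] by simp

lemma is_norm_nonneg:
  assumes "is_norm N"
  shows "0 \<le> N x"
proof -
  have "N (x + - x) \<le> N x + N (- x)" by (rule is_norm_triangle[OF assms])
  then show ?thesis by (simp add: is_norm_zero is_norm_minus assms)
qed

lemma is_norm_pos: "is_norm N \<Longrightarrow> x \<noteq> 0 \<Longrightarrow> 0 < N x"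
  using is_norm_nonneg is_norm_eq_0_iff by (metis order_le_less)

lemma is_norm_convex_on:
  assumes "is_norm N"
  shows "convex_on UNIV N"
proof
  fix t :: real and x y
  assume "0 < t" "t < 1"
  then show "N ((1 - t) *\<^sub>R x + t *\<^sub>R y) \<le> (1 - t) * N x + t * N y"
    using is_norm_triangle[OF assms] is_norm_scaleR[OF assms] by (metis abs_of_pos diff_gt_0_iff_gt)
qed simp

lemma is_norm_continuous_on: "is_norm N \<Longrightarrow> continuous_on UNIV N"
  by (simp add: convex_on_continuous is_norm_convex_on)

text \<open>The minimum of the continuous \<open>N\<close> on the Euclidean unit sphere bounds \<open>N\<close> from below.\<close>
lemma is_norm_lower_bound:
  fixes N :: "real^'n \<Rightarrow> real"
  assumes "is_norm N"
  obtains m where "0 < m" "\<And>x. m * norm x \<le> N x"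
proof -
  have "sphere (0::real^'n) 1 \<noteq> {}"
    by (metis norm_axis_1 mem_sphere_0 empty_iff)
  then obtain x0 where x0: "x0 \<in> sphere 0 1" and min: "\<And>y. y \<in> sphere 0 1 \<Longrightarrow> N x0 \<le> N y"
    using continuous_attains_inf[OF compact_sphere _ continuous_on_subset[OF is_norm_continuous_on[OF assms]]]
    by blast
  have "N x0 * norm x \<le> N x" for x
  proof (cases "x = 0")
    case False
    have "N x0 \<le> N ((1 / norm x) *\<^sub>R x)" using min False by simp
    also have "\<dots> = N x / norm x" using is_norm_scaleR[OF assms] by simp
    finally show ?thesis using False by (simp add: field_simps)
  qed (simp add: is_norm_zero assms)
  moreover have "0 < N x0" using x0 by (auto intro: is_norm_pos assms)
  ultimately show ?thesis using that by blast
qed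

lemma bdd_above_dual_norm:
  fixes N :: "real^'n \<Rightarrow> real"
  assumes "is_norm N"
  shows "bdd_above ((\<lambda>v. x \<bullet> v) ` {v. N v = 1})"
proof -
  obtain m where m: "0 < m" "\<And>x. m * norm x \<le> N x"
    using is_norm_lower_bound[OF assms] by blast
  have "x \<bullet> v \<le> norm x / m" if "N v = 1" for v
  proof -
    have "m * norm v \<le> 1" using m(2)[of v] that by simp
    then have "norm v \<le> 1 / m" using m(1) by (simp add: field_simps mult.commute)
    then have "norm x * norm v \<le> norm x / m"
      by (metis mult_left_mono norm_ge_zero times_divide_eq_right mult_1_right)
    then show ?thesis using Cauchy_Schwarz_ineq2[of x v] by linarith
  qed
  then show ?thesis by (intro bdd_aboveI2) auto
qed

lemma inner_le_dual_norm:
  fixes N :: "real^'n \<Rightarrow> real"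
  assumes "is_norm N"
  shows "x \<bullet> w \<le> dual_norm N x * N w"
proof (cases "w = 0")
  case False
  then have Nw: "0 < N w" by (rule is_norm_pos[OF assms])
  then have "N ((1 / N w) *\<^sub>R w) = 1" by (simp add: is_norm_scaleR[OF assms])
  then have "x \<bullet> ((1 / N w) *\<^sub>R w) \<le> dual_norm N x"
    unfolding dual_norm_def by (intro cSup_upper bdd_above_dual_norm[OF assms] imageI) simp
  then show ?thesis using Nw by (simp add: field_simps)
qed (simp add: is_norm_zero assms)

lemma abs_inner_le_dual_norm:
  fixes N :: "real^'n \<Rightarrow> real"
  assumes "is_norm N"
  shows "\<bar>x \<bullet> w\<bar> \<le> dual_norm N x * N w"
  using inner_le_dual_norm[OF assms, of x w] inner_le_dual_norm[OF assms, of x "- w"]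
  by (simp add: is_norm_minus assms)

lemma dual_norm_pos:
  fixes N :: "real^'n \<Rightarrow> real"
  assumes "is_norm N" "x \<noteq> 0"
  shows "0 < dual_norm N x"
proof -
  have "0 < x \<bullet> x" using assms(2) by simp
  also have "\<dots> \<le> dual_norm N x * N x" by (rule inner_le_dual_norm[OF assms(1)])
  finally show ?thesis using is_norm_nonneg[OF assms(1), of x] by (simp add: zero_less_mult_iff)
qed

lemma dual_norm_nonneg:
  fixes N :: "real^'n \<Rightarrow> real"
  assumes "is_norm N"
  shows "0 \<le> dual_norm N x"
proof -
  obtain w :: "real^'n" where "w \<noteq> 0" using axis_eq_0_iff[of _ "1::real"] by blast
  then have "0 < N w" by (rule is_norm_pos[OF assms])
  moreover have "0 \<le> dual_norm N x * N w"
    by (rule order_trans[OF abs_ge_zero abs_inner_le_dual_norm[OF assms]])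
  ultimately show ?thesis by (simp add: zero_le_mult_iff)
qed

lemma mult_abs_div_dual_norm_le:
  fixes N :: "real^'n \<Rightarrow> real"
  assumes "is_norm N" "0 \<le> t" "\<bar>r\<bar> \<le> \<bar>x \<bullet> w\<bar>"
  shows "t * \<bar>r\<bar> / dual_norm N x \<le> t * N w"
proof -
  have "\<bar>r\<bar> \<le> dual_norm N x * N w"
    using assms(3) abs_inner_le_dual_norm[OF assms(1)] by (rule order_trans)
  then have "\<bar>r\<bar> / dual_norm N x \<le> N w"
    using dual_norm_nonneg[OF assms(1), of x] is_norm_nonneg[OF assms(1), of w]
    by (cases "dual_norm N x = 0") (simp_all add: divide_le_eq mult.commute)
  then show ?thesis using assms(2) by (metis mult_left_mono times_divide_eq_right)
qed

lemma f_val_le: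
  assumes "is_norm N" "0 \<le> \<xi>$i" "w \<bullet> xh = b$i"
  shows "f_val \<xi> N b xh ah i \<le> \<xi>$i * N (w - ah$i)"
  unfolding f_val_def using assms
  by (intro mult_abs_div_dual_norm_le) (auto simp: inner_diff_right inner_commute)

lemma g_val_le:
  assumes "is_norm N" "0 \<le> \<xi>$i" "b$i \<le> w \<bullet> xh"
  shows "g_val \<xi> N b xh ah i \<le> \<xi>$i * N (w - ah$i)"
proof (cases "ah$i \<bullet> xh < b$i")
  case True
  then have "\<bar>ah$i \<bullet> xh - b$i\<bar> \<le> \<bar>xh \<bullet> (w - ah$i)\<bar>"
    using assms(3) by (simp add: inner_diff_right inner_commute)
  then have "f_val \<xi> N b xh ah i \<le> \<xi>$i * N (w - ah$i)"
    unfolding f_val_def by (rule mult_abs_div_dual_norm_le[OF assms(1,2)])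
  then show ?thesis using True by (simp add: g_val_def)
qed (simp add: g_val_def assms mult_nonneg_nonneg is_norm_nonneg)

lemma inner_a_f:
  assumes "is_norm N" "xh \<noteq> 0" "xh \<bullet> v = dual_norm N xh"
  shows "a_f N b xh ah v i \<bullet> xh = b$i"
proof -
  have "v \<bullet> xh = dual_norm N xh" using assms(3) by (simp add: inner_commute)
  then show ?thesis using dual_norm_pos[OF assms(1,2)] by (simp add: a_f_def inner_diff_left)
qed

lemma f_val_eq_a_f:
  assumes "is_norm N" "N v = 1"
  shows "\<xi>$i * N (a_f N b xh ah v i - ah$i) = f_val \<xi> N b xh ah i"
proof -
  have "a_f N b xh ah v i - ah$i = (- ((ah$i \<bullet> xh - b$i) / dual_norm N xh)) *\<^sub>R v"
    by (simp add: a_f_def)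
  then show ?thesis
    using assms dual_norm_nonneg[OF assms(1), of xh]
    by (simp add: f_val_def is_norm_minus is_norm_scaleR)
qed

lemma inner_a_g_ge:
  assumes "is_norm N" "xh \<noteq> 0" "xh \<bullet> v = dual_norm N xh"
  shows "b$i \<le> a_g N b xh ah v i \<bullet> xh"
  using inner_a_f[OF assms, of b ah i] by (simp add: a_g_def)

lemma a_f_nonzero:
  assumes "is_norm N" "xh \<noteq> 0" "xh \<bullet> v = dual_norm N xh" "b$i \<noteq> 0"
  shows "a_f N b xh ah v i \<noteq> 0"
  using inner_a_f[OF assms(1-3), of b ah i] assms(4) by auto

lemma a_g_nonzero:
  assumes "is_norm N" "xh \<noteq> 0" "xh \<bullet> v = dual_norm N xh" "b$i \<noteq> 0" "ah$i \<noteq> 0"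
  shows "a_g N b xh ah v i \<noteq> 0"
  using a_f_nonzero[OF assms(1-4)] assms(5) by (simp add: a_g_def)

lemma g_val_eq_a_g:
  assumes "is_norm N" "N v = 1"
  shows "\<xi>$i * N (a_g N b xh ah v i - ah$i) = g_val \<xi> N b xh ah i"
  by (cases "ah$i \<bullet> xh < b$i") (simp_all add: a_g_def g_val_def f_val_eq_a_f assms is_norm_zero)

lemma nlo_sd_feasible_row_ge: "nlo_sd_feasible b xh A c \<pi> \<Longrightarrow> b$i \<le> A$i \<bullet> xh"
  by (simp add: nlo_sd_feasible_def inner_vec_def)

lemma nlo_sd_feasible_unit_weight:
  assumes "\<And>i. b$i \<le> A$i \<bullet> xh" "A$k \<bullet> xh = b$k"
  shows "nlo_sd_feasible b xh A (A$k) (\<chi> i. if i = k then 1 else 0)"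
  using assms unfolding nlo_sd_feasible_def
  by (simp add: inner_vec_def if_distrib sum.delta cong: if_cong)

text \<open>Complementary slackness: the constraints force \<open>\<Sum>i. \<pi>$i * (A$i \<bullet> xh - b$i) = 0\<close>,
  a sum of nonnegative terms with positive total weight.\<close>
lemma nlo_sd_feasible_active_row:
  assumes "nlo_sd_feasible b xh A c \<pi>"
  obtains k where "A$k \<bullet> xh = b$k"
proof -
  have weights: "\<And>i. 0 \<le> \<pi>$i" "sum (($) \<pi>) UNIV = 1"
    and c: "\<And>j. (\<Sum>i\<in>UNIV. A$i$j * \<pi>$i) = c$j"
    and balance: "c \<bullet> xh = (\<Sum>i\<in>UNIV. b$i * \<pi>$i)"
    using assms by (auto simp: nlo_sd_feasible_def inner_vec_def)
  have "(\<Sum>i\<in>UNIV. \<pi>$i * (A$i \<bullet> xh)) = (\<Sum>i\<in>UNIV. \<Sum>j\<in>UNIV. A$i$j * \<pi>$i * xh$j)"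
    by (simp add: inner_vec_def sum_distrib_left mult_ac)
  also have "\<dots> = (\<Sum>j\<in>UNIV. \<Sum>i\<in>UNIV. A$i$j * \<pi>$i * xh$j)"
    by (rule sum.swap)
  also have "\<dots> = c \<bullet> xh"
    by (simp add: inner_vec_def c flip: sum_distrib_right)
  finally have "(\<Sum>i\<in>UNIV. \<pi>$i * (A$i \<bullet> xh - b$i)) = 0"
    by (simp add: balance right_diff_distrib sum_subtractf mult.commute)
  then have "\<forall>i. \<pi>$i * (A$i \<bullet> xh - b$i) = 0"
    using nlo_sd_feasible_row_ge[OF assms] weights(1) by (subst (asm) sum_nonneg_eq_0_iff) auto
  moreover obtain k where "\<pi>$k \<noteq> 0"
    using weights(2) by (metis sum.neutral zero_neq_one)
  ultimately show ?thesis using that by auto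
qed

lemma argmin_add_sum_remove_le:
  fixes f g :: "'a::finite \<Rightarrow> 'b::ordered_ab_group_add"
  assumes "\<And>i. f k - g k \<le> f i - g i"
  shows "f k + sum g (UNIV - {k}) \<le> f j + sum g (UNIV - {j})"
proof -
  have "f i + sum g (UNIV - {i}) = (f i - g i) + sum g UNIV" for i
    by (simp add: sum.remove[of UNIV i] algebra_simps)
  then show ?thesis using assms[of j] by simp
qed

lemma f_val_add_sum_g_val_le_nlo_sd_obj:
  assumes "is_norm N" "\<And>i. 0 \<le> \<xi>$i" "\<And>i. b$i \<le> A$i \<bullet> xh" "A$k \<bullet> xh = b$k"
  shows "f_val \<xi> N b xh ah k + (\<Sum>i\<in>UNIV - {k}. g_val \<xi> N b xh ah i) \<le> nlo_sd_obj \<xi> N ah A"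
proof -
  have "f_val \<xi> N b xh ah k + (\<Sum>i\<in>UNIV - {k}. g_val \<xi> N b xh ah i)
      \<le> \<xi>$k * N (A$k - ah$k) + (\<Sum>i\<in>UNIV - {k}. \<xi>$i * N (A$i - ah$i))"
    using assms by (intro add_mono sum_mono f_val_le g_val_le) auto
  also have "\<dots> = nlo_sd_obj \<xi> N ah A"
    by (simp add: nlo_sd_obj_def sum.remove[of UNIV k])
  finally show ?thesis .
qed

theorem theorem2:
  fixes b \<xi> :: "real^'m" and xh v :: "real^'n" and ah :: "real^'n^'m"
    and N :: "real^'n \<Rightarrow> real" and istar :: 'm
  assumes norm: "is_norm N"
    and xh_nz: "xh \<noteq> 0"
    and xi_nonneg: "\<forall>i. \<xi>$i \<ge> 0"
    and v_argmax: "N v = 1" "xh \<bullet> v = dual_norm N xh"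
    and istar_argmin: "\<forall>i. f_val \<xi> N b xh ah istar - g_val \<xi> N b xh ah istar
                          \<le> f_val \<xi> N b xh ah i - g_val \<xi> N b xh ah i"
  shows
    "let A = (\<chi> i. if i = istar then a_f N b xh ah v istar else a_g N b xh ah v i);
         c = A$istar;
         \<pi> = (\<chi> k. if k = istar then (1::real) else 0);
         val = f_val \<xi> N b xh ah istar + (\<Sum>i\<in>UNIV - {istar}. g_val \<xi> N b xh ah i)
     in nlo_sd_feasible b xh A c \<pi>
      \<and> nlo_sd_obj \<xi> N ah A = val
      \<and> (\<forall>A' c' \<pi>'. nlo_sd_feasible b xh A' c' \<pi>' \<longrightarrow> val \<le> nlo_sd_obj \<xi> N ah A')
      \<and> ((\<forall>i. b$i \<noteq> 0 \<and> ah$i \<noteq> 0) \<longrightarrow> c \<noteq> 0 \<and> (\<forall>i. A$i \<noteq> 0))"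
proof -
  define A where "A = (\<chi> i. if i = istar then a_f N b xh ah v istar else a_g N b xh ah v i)"
  define val where "val = f_val \<xi> N b xh ah istar + (\<Sum>i\<in>UNIV - {istar}. g_val \<xi> N b xh ah i)"
  have feasible_rows: "\<And>i. b$i \<le> A$i \<bullet> xh" and active: "A$istar \<bullet> xh = b$istar"
    by (simp_all add: A_def inner_a_f[OF norm xh_nz v_argmax(2)]
        inner_a_g_ge[OF norm xh_nz v_argmax(2)])
  have "nlo_sd_obj \<xi> N ah A = val"
    by (simp add: nlo_sd_obj_def val_def A_def sum.remove[of UNIV istar]
        f_val_eq_a_f[OF norm v_argmax(1)] g_val_eq_a_g[OF norm v_argmax(1)])
  moreover have "val \<le> nlo_sd_obj \<xi> N ah A'"
    if feasible: "nlo_sd_feasible b xh A' c' \<pi>'" for A' c' \<pi>'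
  proof -
    obtain k where k: "A'$k \<bullet> xh = b$k" using nlo_sd_feasible_active_row[OF feasible] .
    have "val \<le> f_val \<xi> N b xh ah k + (\<Sum>i\<in>UNIV - {k}. g_val \<xi> N b xh ah i)"
      unfolding val_def using istar_argmin by (intro argmin_add_sum_remove_le) blast
    also have "\<dots> \<le> nlo_sd_obj \<xi> N ah A'"
      using xi_nonneg nlo_sd_feasible_row_ge[OF feasible] k
      by (intro f_val_add_sum_g_val_le_nlo_sd_obj norm) auto
    finally show ?thesis .
  qed
  moreover have "A$i \<noteq> 0" if "\<forall>i. b$i \<noteq> 0 \<and> ah$i \<noteq> 0" for i
    using that by (simp add: A_def a_f_nonzero[OF norm xh_nz v_argmax(2)]
        a_g_nonzero[OF norm xh_nz v_argmax(2)])
  ultimately show ?thesis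
    using nlo_sd_feasible_unit_weight[OF feasible_rows active]
    unfolding Let_def A_def[symmetric] val_def[symmetric] by blast
qed

end
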